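(* The $2\times2\times2$ quaternion tensor $$T=\left(\begin{bmatrix}1&0\\0&1\end{bmatrix};\begin{bmatrix}0&1\\0&0\end{bmatrix}\right)$$ has $\mathrm{rank}(T)=3$.
   Context: $\mathbb{H}$ denotes the real quaternions. An $n_1\times n_2\times n_3$ quaternion tensor is an array $T=(T_{ijk})$ with entries in $\mathbb{H}$, $1\le i\le n_1$, $1\le j\le n_2$, $1\le k\le n_3$; it is written $T=(A_1;\dots;A_{n_2})$ where the frontal slice $A_j$ is the $n_1\times n_3$ matrix $(T_{ijk})_{i,k}$. A nonzero tensor is simple if $T_{ijk}=a_ib_jc_k$ (quaternion product in this order) for some $\vec a\in\mathbb{H}^{n_1},\vec b\in\mathbb{H}^{n_2},\vec c\in\mathbb{H}^{n_3}$. The rank of $T$ is the least number of simple tensors summing to $T$. *)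

theory Defs
  imports Complex_Main
begin

datatype quat = Quat (qre: real) (qi: real) (qj: real) (qk: real)

instantiation quat :: ring_1
begin
definition "0 = Quat 0 0 0 0"
definition "1 = Quat 1 0 0 0"
definition "x + y = Quat (qre x + qre y) (qi x + qi y) (qj x + qj y) (qk x + qk y)"
definition "x - y = Quat (qre x - qre y) (qi x - qi y) (qj x - qj y) (qk x - qk y)"
definition "- x = Quat (- qre x) (- qi x) (- qj x) (- qk x)"
text \<open>Hamilton product: i^2 = j^2 = k^2 = ijk = -1.\<close>
definition "x * y = Quat
  (qre x * qre y - qi x * qi y - qj x * qj y - qk x * qk y)
  (qre x * qi y + qi x * qre y + qj x * qk y - qk x * qj y)
  (qre x * qj y - qi x * qk y + qj x * qre y + qk x * qi y)
  (qre x * qk y + qi x * qj y - qj x * qi y + qk x * qre y)"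
instance
  by standard (simp_all add: zero_quat_def one_quat_def plus_quat_def minus_quat_def
      uminus_quat_def times_quat_def quat.expand algebra_simps)
end

text \<open>An n1 x n2 x n3 quaternion tensor is represented as a function of three
  indices (0-based), only the values with i < n1, j < n2, k < n3 being relevant.\<close>

type_synonym qtensor = "nat \<Rightarrow> nat \<Rightarrow> nat \<Rightarrow> quat"

definition simple_tensor :: "nat \<Rightarrow> nat \<Rightarrow> nat \<Rightarrow> qtensor \<Rightarrow> bool" where
  "simple_tensor n1 n2 n3 S \<longleftrightarrow>
     (\<exists>i<n1. \<exists>j<n2. \<exists>k<n3. S i j k \<noteq> 0) \<and>
     (\<exists>a b c :: nat \<Rightarrow> quat. \<forall>i<n1. \<forall>j<n2. \<forall>k<n3. S i j k = a i * b j * c k)"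

definition tensor_rank :: "nat \<Rightarrow> nat \<Rightarrow> nat \<Rightarrow> qtensor \<Rightarrow> nat" where
  "tensor_rank n1 n2 n3 T = (LEAST r. \<exists>Ss :: nat \<Rightarrow> qtensor.
      (\<forall>l<r. simple_tensor n1 n2 n3 (Ss l)) \<and>
      (\<forall>i<n1. \<forall>j<n2. \<forall>k<n3. T i j k = (\<Sum>l<r. Ss l i j k)))"

end

theory Submission
  imports Defs
begin

text \<open>Write the fibres of the tensor as vectors in the right vector space \<open>\<bbbH>\<^sup>2\<close>:
  a decomposition \<open>T = a \<otimes> b \<otimes> c + a' \<otimes> b' \<otimes> c'\<close> makes the fibre \<open>T(\<cdot>,j,k)\<close> equal to
  \<open>a (b\<^sub>j c\<^sub>k) + a' (b'\<^sub>j c'\<^sub>k)\<close>. The fibres \<open>(0,0)\<close> and \<open>(0,1)\<close> are the unit vectors, so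
  \<open>a, a'\<close> form a right basis and coefficients are unique. The zero fibre \<open>(1,0)\<close> then
  forces \<open>b\<^sub>1 c\<^sub>0 = b'\<^sub>1 c'\<^sub>0 = 0\<close>, and comparing the equal fibres \<open>(0,0)\<close> and \<open>(1,1)\<close>
  gives \<open>b\<^sub>0 c\<^sub>0 = b\<^sub>1 c\<^sub>1\<close> and \<open>b'\<^sub>0 c'\<^sub>0 = b'\<^sub>1 c'\<^sub>1\<close>. Either factor of \<open>b\<^sub>1 c\<^sub>0\<close> vanishing kills
  \<open>b\<^sub>0 c\<^sub>0\<close>, and likewise for the primed terms, so the fibre \<open>(0,0)\<close> would be zero.\<close>

instantiation quat :: division_ring
begin

definition "inverse x = (let n = qre x^2 + qi x^2 + qj x^2 + qk x^2 in
   Quat (qre x / n) (- qi x / n) (- qj x / n) (- qk x / n))"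

definition "divide x y = x * inverse (y :: quat)"

lemma quat_norm_square_nonzero:
  "(x :: quat) \<noteq> 0 \<Longrightarrow> qre x^2 + qi x^2 + qj x^2 + qk x^2 \<noteq> 0"
  by (cases x) (auto simp: zero_quat_def add_nonneg_eq_0_iff)

instance
proof
  fix a :: quat
  assume "a \<noteq> 0"
  define n where "n = qre a^2 + qi a^2 + qj a^2 + qk a^2"
  have "n \<noteq> 0"
    using quat_norm_square_nonzero[OF \<open>a \<noteq> 0\<close>] by (simp add: n_def)
  then have norm: "qre a * qre a / n + qi a * qi a / n + qj a * qj a / n + qk a * qk a / n = 1"
    by (simp add: n_def power2_eq_square add_divide_distrib[symmetric])
  have inv: "inverse a = Quat (qre a / n) (- qi a / n) (- qj a / n) (- qk a / n)"
    by (simp add: inverse_quat_def Let_def n_def)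
  show "inverse a * a = 1" "a * inverse a = 1"
    using norm by (simp_all add: inv times_quat_def one_quat_def algebra_simps)
qed (simp_all add: divide_quat_def inverse_quat_def zero_quat_def)

end


lemma single_vector_not_spanning_plane:
  fixes u :: "nat \<Rightarrow> 'a :: division_ring"
  assumes "u 0 * s = 1" and "u 1 * s = 0" and "u 1 * t = 1"
  shows False
proof -
  have "s \<noteq> 0" using assms(1) by auto
  then have "u 1 = 0" using assms(2) by simp
  then show False using assms(3) by simp
qed

lemma spanning_pair_second_coefficient_zero:
  fixes u v :: "nat \<Rightarrow> 'a :: division_ring"
  assumes e0: "\<And>i. i < 2 \<Longrightarrow> u i * x0 + v i * y0 = of_bool (i = 0)"
    and e1: "\<And>i. i < 2 \<Longrightarrow> u i * x1 + v i * y1 = of_bool (i = 1)"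
    and zero: "\<And>i. i < 2 \<Longrightarrow> u i * x + v i * y = 0"
  shows "y = 0"
proof (rule ccontr)
  assume "y \<noteq> 0"
  define w where "w = x * inverse y"
  have v: "v i = - (u i * w)" if "i < 2" for i
  proof -
    have "(v i + u i * w) * y = u i * x + v i * y"
      using \<open>y \<noteq> 0\<close> by (simp add: w_def algebra_simps mult.assoc)
    then show ?thesis using zero[OF that] \<open>y \<noteq> 0\<close> by (simp add: eq_neg_iff_add_eq_0)
  qed
  have combine: "u i * x' + v i * y' = u i * (x' - w * y')" if "i < 2" for i x' y'
    using v[OF that] by (simp add: algebra_simps mult.assoc)
  show False
    using e0[of 0] e0[of 1] e1[of 1]
    by (intro single_vector_not_spanning_plane[of u "x0 - w * y0" "x1 - w * y1"])
      (simp_all add: combine)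
qed

lemma spanning_pair_right_independent:
  fixes u v :: "nat \<Rightarrow> 'a :: division_ring"
  assumes "\<And>i. i < 2 \<Longrightarrow> u i * x0 + v i * y0 = of_bool (i = 0)"
    and "\<And>i. i < 2 \<Longrightarrow> u i * x1 + v i * y1 = of_bool (i = 1)"
    and "\<And>i. i < 2 \<Longrightarrow> u i * x + v i * y = 0"
  shows "x = 0" and "y = 0"
proof -
  show "y = 0"
    using assms by (rule spanning_pair_second_coefficient_zero)
  show "x = 0"
    using assms by (intro spanning_pair_second_coefficient_zero[of v y0 u x0 y1 x1 y x])
      (simp_all add: add.commute)
qed

definition identity_nilpotent_tensor :: "nat \<Rightarrow> nat \<Rightarrow> nat \<Rightarrow> 'a :: zero_neq_one" where
  "identity_nilpotent_tensor i j k =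
     (if (i, j, k) \<in> {(0, 0, 0), (1, 0, 1), (0, 1, 1)} then 1 else 0)"

lemma identity_nilpotent_tensor_not_sum_of_two_products:
  fixes a b c a' b' c' :: "nat \<Rightarrow> 'a :: division_ring"
  assumes decomp: "\<forall>i<2. \<forall>j<2. \<forall>k<2.
    identity_nilpotent_tensor i j k = a i * b j * c k + a' i * b' j * c' k"
  shows False
proof -
  define \<beta> where "\<beta> j k = b j * c k" for j k
  define \<beta>' where "\<beta>' j k = b' j * c' k" for j k
  have fibre: "a i * \<beta> j k + a' i * \<beta>' j k = identity_nilpotent_tensor i j k"
    if "i < 2" "j < 2" "k < 2" for i j k
    using decomp that by (simp add: \<beta>_def \<beta>'_def mult.assoc)
  have small: "i < 2 \<longleftrightarrow> i = 0 \<or> i = 1" for i :: nat by auto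
  have e0: "a i * \<beta> 0 0 + a' i * \<beta>' 0 0 = of_bool (i = 0)"
    and e1: "a i * \<beta> 0 1 + a' i * \<beta>' 0 1 = of_bool (i = 1)"
    and zero: "a i * \<beta> 1 0 + a' i * \<beta>' 1 0 = 0"
    and diff: "a i * (\<beta> 0 0 - \<beta> 1 1) + a' i * (\<beta>' 0 0 - \<beta>' 1 1) = 0"
    if "i < 2" for i
    using that fibre[of i] by (auto simp: small identity_nilpotent_tensor_def algebra_simps)
  have "\<beta> 1 0 = 0" "\<beta>' 1 0 = 0"
    using spanning_pair_right_independent[of a _ a', OF e0 e1 zero] by simp_all
  moreover have "\<beta> 0 0 - \<beta> 1 1 = 0" "\<beta>' 0 0 - \<beta>' 1 1 = 0"
    using spanning_pair_right_independent[of a _ a', OF e0 e1 diff] by simp_all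
  ultimately have "\<beta> 0 0 = 0" "\<beta>' 0 0 = 0"
    by (auto simp: \<beta>_def \<beta>'_def)
  then show False
    using e0[of 0] by simp
qed

definition has_decomposition :: "nat \<Rightarrow> nat \<Rightarrow> nat \<Rightarrow> qtensor \<Rightarrow> nat \<Rightarrow> bool" where
  "has_decomposition n1 n2 n3 T r \<longleftrightarrow> (\<exists>Ss :: nat \<Rightarrow> qtensor.
      (\<forall>l<r. simple_tensor n1 n2 n3 (Ss l)) \<and>
      (\<forall>i<n1. \<forall>j<n2. \<forall>k<n3. T i j k = (\<Sum>l<r. Ss l i j k)))"

lemma tensor_rank_eqI:
  assumes "has_decomposition n1 n2 n3 T r"
    and "\<And>s. has_decomposition n1 n2 n3 T s \<Longrightarrow> r \<le> s"
  shows "tensor_rank n1 n2 n3 T = r"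
  using assms unfolding tensor_rank_def has_decomposition_def by (rule Least_equality)

definition basis_tensor :: "nat \<Rightarrow> nat \<Rightarrow> nat \<Rightarrow> qtensor" where
  "basis_tensor p q t i j k = of_bool (i = p) * of_bool (j = q) * of_bool (k = t)"

lemma simple_basis_tensor:
  assumes "p < n1" "q < n2" "t < n3"
  shows "simple_tensor n1 n2 n3 (basis_tensor p q t)"
  unfolding simple_tensor_def basis_tensor_def using assms by fastforce

lemma has_decomposition_le_two_imp_sum_of_two_products:
  assumes "has_decomposition n1 n2 n3 T r" and "r \<le> 2"
  shows "\<exists>a b c a' b' c'. \<forall>i<n1. \<forall>j<n2. \<forall>k<n3.
    T i j k = a i * b j * c k + a' i * b' j * c' k"
proof -
  obtain Ss where simple: "\<forall>l<r. simple_tensor n1 n2 n3 (Ss l)"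
    and sum: "\<forall>i<n1. \<forall>j<n2. \<forall>k<n3. T i j k = (\<Sum>l<r. Ss l i j k)"
    using assms(1) unfolding has_decomposition_def by blast
  have "\<forall>l. \<exists>a b c. l < r \<longrightarrow>
      (\<forall>i<n1. \<forall>j<n2. \<forall>k<n3. Ss l i j k = a i * b j * c k)"
    using simple unfolding simple_tensor_def by blast
  then obtain A B C where factors: "\<And>l i j k. l < r \<Longrightarrow> i < n1 \<Longrightarrow> j < n2 \<Longrightarrow> k < n3 \<Longrightarrow>
      Ss l i j k = A l i * B l j * C l k"
    by metis
  define A' where "A' l = (if l < r then A l else (\<lambda>_. 0))" for l
  have "T i j k = A' 0 i * B 0 j * C 0 k + A' 1 i * B 1 j * C 1 k"
    if "i < n1" "j < n2" "k < n3" for i j k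
  proof -
    have "T i j k = (\<Sum>l<r. A' l i * B l j * C l k)"
      using sum that factors by (simp add: A'_def)
    also have "\<dots> = (\<Sum>l<2. A' l i * B l j * C l k)"
      using \<open>r \<le> 2\<close> by (intro sum.mono_neutral_left) (auto simp: A'_def)
    finally show ?thesis by (simp add: numeral_2_eq_2)
  qed
  then show ?thesis by blast
qed

lemma has_decomposition_identity_nilpotent_tensor:
  "has_decomposition 2 2 2 identity_nilpotent_tensor 3"
proof -
  define Ss :: "nat \<Rightarrow> qtensor" where
    "Ss l = (case [(0, 0, 0), (1, 0, 1), (0, 1, 1)] ! l of (p, q, t) \<Rightarrow> basis_tensor p q t)" for l
  have "simple_tensor 2 2 2 (Ss l)" if "l < 3" for l
    using that by (auto simp: Ss_def less_Suc_eq numeral_3_eq_3 intro!: simple_basis_tensor)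
  moreover have "identity_nilpotent_tensor i j k = (\<Sum>l<3. Ss l i j k)"
    if "i < 2" "j < 2" "k < 2" for i j k
    using that by (auto simp: Ss_def less_Suc_eq numeral_2_eq_2 numeral_3_eq_3
        identity_nilpotent_tensor_def basis_tensor_def)
  ultimately show ?thesis
    unfolding has_decomposition_def by blast
qed

lemma has_decomposition_identity_nilpotent_tensor_ge_3:
  assumes "has_decomposition 2 2 2 identity_nilpotent_tensor s"
  shows "3 \<le> s"
proof (rule ccontr)
  assume "\<not> 3 \<le> s"
  then have "s \<le> 2" by simp
  then show False
    using has_decomposition_le_two_imp_sum_of_two_products[OF assms]
      identity_nilpotent_tensor_not_sum_of_two_products by blast
qed

theorem mainTheorem6:
  shows "tensor_rank 2 2 2
           (\<lambda>i j k. if (i, j, k) \<in> {(0, 0, 0), (1, 0, 1), (0, 1, 1)} then 1 else 0) = 3"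
  unfolding identity_nilpotent_tensor_def[symmetric]
  using has_decomposition_identity_nilpotent_tensor has_decomposition_identity_nilpotent_tensor_ge_3
  by (rule tensor_rank_eqI)

end
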